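(* Let $A\in\mathbb{R}^{m\times n}$, $b\in\mathbb{R}^m$ with $Ax=b$ consistent, and let $\{x^k\}$, $\{s_k\}$, $\{\gamma_k\}$ be the sequences generated by the RIM-AS algorithm described in the context. For every $k\ge1$, writing $\underline{s_i}$ for the last component of $s_i$, the matrix $V_k^\top V_k$, where $V_k=(x^{j_k}-x^k,\dots,x^{k-1}-x^k)\in\mathbb{R}^{n\times(k-j_k)}$, is invertible and its inverse is $$C_k=C\big(\gamma_{j_k}\underline{s_{j_k}},\ldots,\gamma_{k-1}\underline{s_{k-1}}\big)\in\mathbb{R}^{(k-j_k)\times(k-j_k)}.$$
   Context: RIM-AS algorithm: given a probability space $(\Omega,\mathcal{F},\mathbf{P})$ of matrices in $\mathbb{R}^{m\times q}$, a positive integer $\ell$ and $x^0\in\operatorname{Range}(A^\top)$, for $k=0,1,\dots$: draw $S_k\in\Omega$ (redrawing until $S_k^\top(Ax^k-b)\neq0$); set $j_k=\max\{k-\ell+1,0\}$, $M_k=(x^{j_k}-x^k,\dots,x^{k-1}-x^k,-A^\top S_kS_k^\top(Ax^k-b))\in\mathbb{R}^{n\times(k-j_k+1)}$, $\gamma_k=\|S_k^\top(Ax^k-b)\|_2^2$; let $s_k$ solve $M_k^\top M_ks_k=\gamma_ke$ with $e$ the last standard unit vector of $\mathbb{R}^{k-j_k+1}$; set $x^{k+1}=x^k+M_ks_k$. For nonzero reals $\alpha_1,\dots,\alpha_p$, $C(\alpha_1,\dots,\alpha_p)$ is the symmetric tridiagonal $p\times p$ matrix with diagonal entries $C_{11}=\alpha_1^{-1}$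 and $C_{ii}=\alpha_{i-1}^{-1}+\alpha_i^{-1}$ for $2\le i\le p$, off-diagonal entries $C_{i,i+1}=C_{i+1,i}=-\alpha_i^{-1}$ for $1\le i\le p-1$, and all other entries zero. *)

theory Defs
  imports "Jordan_Normal_Form.Matrix"
begin

text \<open>Index j_k = max (k - l + 1) 0 (natural subtraction truncates at 0).\<close>
definition rim_j :: "nat \<Rightarrow> nat \<Rightarrow> nat" where
  "rim_j l k = k + 1 - l"

definition rim_res :: "real mat \<Rightarrow> real vec \<Rightarrow> real vec \<Rightarrow> real vec" where
  "rim_res A b x = A *\<^sub>v x - b"

definition rim_V :: "nat \<Rightarrow> (nat \<Rightarrow> real vec) \<Rightarrow> nat \<Rightarrow> nat \<Rightarrow> real mat" where
  "rim_V n x l k = mat_of_cols n (map (\<lambda>i. x i - x k) [rim_j l k..<k])"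

definition rim_M :: "nat \<Rightarrow> real mat \<Rightarrow> real vec \<Rightarrow> (nat \<Rightarrow> real mat) \<Rightarrow> (nat \<Rightarrow> real vec)
    \<Rightarrow> nat \<Rightarrow> nat \<Rightarrow> real mat" where
  "rim_M n A b S x l k = mat_of_cols n
     (map (\<lambda>i. x i - x k) [rim_j l k..<k] @
      [- ((transpose_mat A * S k * transpose_mat (S k)) *\<^sub>v rim_res A b (x k))])"

definition rim_gamma :: "real mat \<Rightarrow> real vec \<Rightarrow> (nat \<Rightarrow> real mat) \<Rightarrow> (nat \<Rightarrow> real vec) \<Rightarrow> nat \<Rightarrow> real" where
  "rim_gamma A b S x k =
     (let r = transpose_mat (S k) *\<^sub>v rim_res A b (x k) in r \<bullet> r)"

definition Ctri :: "real list \<Rightarrow> real mat" where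
  "Ctri \<alpha> = mat (length \<alpha>) (length \<alpha>) (\<lambda>(i,j).
     if i = j then (if i = 0 then 1 / \<alpha> ! 0 else 1 / \<alpha> ! (i - 1) + 1 / \<alpha> ! i)
     else if j = i + 1 then - 1 / \<alpha> ! i
     else if i = j + 1 then - 1 / \<alpha> ! j
     else 0)"

end

theory Submission
  imports Defs "Jordan_Normal_Form.Determinant"
begin

text \<open>
  Write d k = x (k+1) - x k = M k s k. The normal equations give M k^T d k = \<gamma> k e, so d k is
  orthogonal to every column x i - x k of V k, and |d k|^2 = \<gamma> k (last entry of s k), which is
  positive because \<gamma> k > 0 rules out d k = 0. As the windows [j k, k) only slide forward, the
  increments inside one window are pairwise orthogonal, and Pythagoras turns the Gram matrix of
  V k into the matrix of tail sums (x a - x k) \<bullet> (x c - x k) = \<Sum>t \<ge> max a c. |d t|^2.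
  A tail-sum matrix with nonzero weights \<alpha> is inverted by C \<alpha>: every column of C \<alpha> is a
  combination of two first differences, and a first difference of tail sums is a single weight.
\<close>

definition tail_sum_mat :: "real list \<Rightarrow> real mat" where
  "tail_sum_mat \<alpha> = mat (length \<alpha>) (length \<alpha>) (\<lambda>(a, c). \<Sum>t\<in>{max a c..<length \<alpha>}. \<alpha> ! t)"

lemma sum_atLeast_max_diff:
  fixes f :: "nat \<Rightarrow> 'a :: ab_group_add"
  assumes "b < p"
  shows "(\<Sum>t\<in>{max a b..<p}. f t) - (\<Sum>t\<in>{max a (Suc b)..<p}. f t) = (if a \<le> b then f b else 0)"
proof (cases "a \<le> b")
  case False
  then have "max a b = a" "max a (Suc b) = a" by auto
  then show ?thesis using False by simp
qed (use assms in \<open>simp add: max_def sum.atLeast_Suc_lessThan\<close>)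

lemma Ctri_index_as_differences:
  assumes "c < length \<alpha>" "b < length \<alpha>"
  shows "Ctri \<alpha> $$ (c, b) =
    (of_bool (c = b) - of_bool (c = Suc b)) / \<alpha> ! b
    - (if b = 0 then 0 else (of_bool (c = b - 1) - of_bool (c = b)) / \<alpha> ! (b - 1))"
  using assms by (auto simp: Ctri_def field_simps)

lemma sum_lessThan_mult_of_bool_eq:
  fixes g :: "nat \<Rightarrow> 'a :: semiring_1"
  shows "(\<Sum>c<p. g c * of_bool (c = b)) = (if b < p then g b else 0)"
  by (simp add: of_bool_def if_distrib[of "(*) _"] cong: if_cong)

lemma tail_sum_mat_mult_Ctri:
  assumes nz: "\<And>i. i < length \<alpha> \<Longrightarrow> \<alpha> ! i \<noteq> 0"
  shows "tail_sum_mat \<alpha> * Ctri \<alpha> = 1\<^sub>m (length \<alpha>)"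
proof (rule eq_matI)
  define p where "p = length \<alpha>"
  show "dim_row (tail_sum_mat \<alpha> * Ctri \<alpha>) = dim_row (1\<^sub>m (length \<alpha>))"
    "dim_col (tail_sum_mat \<alpha> * Ctri \<alpha>) = dim_col (1\<^sub>m (length \<alpha>))"
    by (simp_all add: tail_sum_mat_def Ctri_def)
  fix a b assume "a < dim_row (1\<^sub>m (length \<alpha>))" "b < dim_col (1\<^sub>m (length \<alpha>))"
  then have a: "a < p" and b: "b < p" by (simp_all add: p_def)
  define \<sigma> where "\<sigma> i = (\<Sum>t\<in>{max a i..<p}. \<alpha> ! t)" for i
  have \<sigma>_beyond: "\<sigma> i = 0" if "p \<le> i" for i using that by (simp add: \<sigma>_def)
  have "(tail_sum_mat \<alpha> * Ctri \<alpha>) $$ (a, b) = (\<Sum>c<p. \<sigma> c * Ctri \<alpha> $$ (c, b))"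
    using a b by (simp add: tail_sum_mat_def Ctri_def scalar_prod_def \<sigma>_def p_def atLeast0LessThan)
  also have "\<dots> = (\<Sum>c<p. \<sigma> c * ((of_bool (c = b) - of_bool (c = Suc b)) / \<alpha> ! b
      - (if b = 0 then 0 else (of_bool (c = b - 1) - of_bool (c = b)) / \<alpha> ! (b - 1))))"
    using b by (intro sum.cong) (simp_all add: Ctri_index_as_differences p_def)
  also have "\<dots> = (\<sigma> b - \<sigma> (Suc b)) / \<alpha> ! b - (if b = 0 then 0 else (\<sigma> (b - 1) - \<sigma> b) / \<alpha> ! (b - 1))"
    using b \<sigma>_beyond
    by (simp add: sum_subtractf sum_divide_distrib[symmetric] right_diff_distrib
        sum_lessThan_mult_of_bool_eq sum.distrib not_less_eq)
  also have "\<dots> = of_bool (a \<le> b) - of_bool (a \<le> b - 1 \<and> b \<noteq> 0)"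
  proof -
    have "\<sigma> b - \<sigma> (Suc b) = of_bool (a \<le> b) * \<alpha> ! b"
      using b by (simp add: \<sigma>_def sum_atLeast_max_diff)
    moreover have "\<sigma> (b - 1) - \<sigma> b = of_bool (a \<le> b - 1) * \<alpha> ! (b - 1)" if "b \<noteq> 0"
    proof -
      obtain b' where "b = Suc b'" using \<open>b \<noteq> 0\<close> not0_implies_Suc by blast
      then show ?thesis using b by (simp add: \<sigma>_def sum_atLeast_max_diff)
    qed
    ultimately show ?thesis
      using b nz by (simp add: p_def)
  qed
  also have "\<dots> = 1\<^sub>m p $$ (a, b)"
    using a b by auto
  finally show "(tail_sum_mat \<alpha> * Ctri \<alpha>) $$ (a, b) = 1\<^sub>m (length \<alpha>) $$ (a, b)" by (simp add: p_def)
qed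

lemma tail_sum_mat_inverse:
  assumes "\<And>i. i < length \<alpha> \<Longrightarrow> \<alpha> ! i \<noteq> 0"
  shows "invertible_mat (tail_sum_mat \<alpha>) \<and> inverts_mat (tail_sum_mat \<alpha>) (Ctri \<alpha>)
    \<and> inverts_mat (Ctri \<alpha>) (tail_sum_mat \<alpha>)"
proof -
  let ?p = "length \<alpha>"
  have G: "tail_sum_mat \<alpha> \<in> carrier_mat ?p ?p" and C: "Ctri \<alpha> \<in> carrier_mat ?p ?p"
    by (simp_all add: tail_sum_mat_def Ctri_def)
  have GC: "tail_sum_mat \<alpha> * Ctri \<alpha> = 1\<^sub>m ?p"
    using assms by (rule tail_sum_mat_mult_Ctri)
  have CG: "Ctri \<alpha> * tail_sum_mat \<alpha> = 1\<^sub>m ?p"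
    using mat_mult_left_right_inverse[OF G C GC] .
  show ?thesis
    using G C GC CG by (auto simp: invertible_mat_def inverts_mat_def square_mat.simps)
qed

lemma scalar_prod_diff_diff:
  fixes u v w z :: "'a :: comm_ring vec"
  assumes "u \<in> carrier_vec n" "v \<in> carrier_vec n" "w \<in> carrier_vec n" "z \<in> carrier_vec n"
  shows "(u - v) \<bullet> (w - z) = u \<bullet> w - u \<bullet> z - v \<bullet> w + v \<bullet> z"
  using assms by (simp add: minus_scalar_prod_distrib scalar_prod_minus_distrib)

lemma scalar_prod_diff_of_orthogonal_increments:
  fixes y :: "nat \<Rightarrow> real vec"
  assumes y: "\<And>i. y i \<in> carrier_vec n"
    and orth: "\<And>s t. j \<le> s \<Longrightarrow> s < t \<Longrightarrow> t < k \<Longrightarrow> (y (Suc s) - y s) \<bullet> (y (Suc t) - y t) = 0"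
    and a: "j \<le> a" "a \<le> k" and c: "j \<le> c" "c \<le> k"
  shows "(y a - y k) \<bullet> (y c - y k) = (\<Sum>t\<in>{max a c..<k}. (y (Suc t) - y t) \<bullet> (y (Suc t) - y t))"
proof -
  \<comment> \<open>Expanded into the values of X, every step below is linear arithmetic.\<close>
  define X where "X s t = y s \<bullet> y t" for s t
  have X_sym: "X s t = X t s" for s t
    unfolding X_def by (rule comm_scalar_prod[OF y y])
  have expand: "(y s - y t) \<bullet> (y u - y v) = X s u - X s v - X t u + X t v" for s t u v
    unfolding X_def by (rule scalar_prod_diff_diff[OF y y y y])
  have increment_perp_tail: "(y (Suc s) - y s) \<bullet> (y i - y k) = 0" if "j \<le> s" "s < i" "i \<le> k" for s i
    using \<open>i \<le> k\<close> \<open>s < i\<close>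
  proof (induction i rule: inc_induct)
    case (step m)
    have "(y (Suc s) - y s) \<bullet> (y (Suc m) - y m) = 0"
      using orth \<open>j \<le> s\<close> step by blast
    moreover have "(y (Suc s) - y s) \<bullet> (y (Suc m) - y k) = 0"
      using step by simp
    ultimately show ?case
      unfolding expand by linarith
  qed (simp add: expand)
  have segment_perp_tail: "(y i - y c') \<bullet> (y c' - y k) = 0" if "j \<le> i" "i \<le> c'" "c' \<le> k" for i c'
    using \<open>i \<le> c'\<close> \<open>j \<le> i\<close>
  proof (induction i rule: inc_induct)
    case (step m)
    then show ?case
      using increment_perp_tail[of m c'] \<open>c' \<le> k\<close> unfolding expand by linarith
  qed (simp add: expand)
  have tail_norm: "(y i - y k) \<bullet> (y i - y k) = (\<Sum>t\<in>{i..<k}. (y (Suc t) - y t) \<bullet> (y (Suc t) - y t))"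
    if "j \<le> i" "i \<le> k" for i
    using \<open>i \<le> k\<close> \<open>j \<le> i\<close>
  proof (induction i rule: inc_induct)
    case (step m)
    then show ?case
      using increment_perp_tail[of m "Suc m"] X_sym[of m "Suc m"] X_sym[of k m] X_sym[of k "Suc m"]
      unfolding expand sum.atLeast_Suc_lessThan[OF \<open>m < k\<close>] by linarith
  qed (simp add: expand)
  have ordered: "(y a' - y k) \<bullet> (y c' - y k) = (\<Sum>t\<in>{c'..<k}. (y (Suc t) - y t) \<bullet> (y (Suc t) - y t))"
    if "j \<le> a'" "a' \<le> c'" "c' \<le> k" for a' c'
    using segment_perp_tail[OF that] tail_norm[of c'] that unfolding expand by linarith
  show ?thesis
  proof (cases "a \<le> c")
    case False
    then have "(y a - y k) \<bullet> (y c - y k) = (y c - y k) \<bullet> (y a - y k)"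
      using y by (intro comm_scalar_prod[of _ n]) auto
    then show ?thesis using False ordered[of c a] a c by simp
  qed (use ordered a c in simp)
qed

lemma gram_mat_of_orthogonal_increments:
  fixes y :: "nat \<Rightarrow> real vec"
  assumes y: "\<And>i. y i \<in> carrier_vec n"
    and orth: "\<And>s t. j \<le> s \<Longrightarrow> s < t \<Longrightarrow> t < k \<Longrightarrow> (y (Suc s) - y s) \<bullet> (y (Suc t) - y t) = 0"
  defines "V \<equiv> mat_of_cols n (map (\<lambda>i. y i - y k) [j..<k])"
  shows "transpose_mat V * V = tail_sum_mat (map (\<lambda>t. (y (Suc t) - y t) \<bullet> (y (Suc t) - y t)) [j..<k])"
    (is "_ = tail_sum_mat ?w")
proof (rule eq_matI)
  fix a c assume "a < dim_row (tail_sum_mat ?w)" "c < dim_col (tail_sum_mat ?w)"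
  then have a: "a < k - j" and c: "c < k - j" by (simp_all add: tail_sum_mat_def)
  have "(transpose_mat V * V) $$ (a, c) = (y (j + a) - y k) \<bullet> (y (j + c) - y k)"
    using a c y by (simp add: V_def)
  also have "\<dots> = (\<Sum>t\<in>{max (j + a) (j + c)..<k}. (y (Suc t) - y t) \<bullet> (y (Suc t) - y t))"
    using a c by (intro scalar_prod_diff_of_orthogonal_increments[of y n j k]) (auto intro: y orth)
  also have "\<dots> = (\<Sum>t\<in>{max a c..<k - j}. (y (Suc (t + j)) - y (t + j)) \<bullet> (y (Suc (t + j)) - y (t + j)))"
  proof -
    have "{max (j + a) (j + c)..<k} = {max a c + j..<k - j + j}"
      using a by auto
    then show ?thesis by (simp only: sum.shift_bounds_nat_ivl)
  qed
  finally show "(transpose_mat V * V) $$ (a, c) = tail_sum_mat ?w $$ (a, c)"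
    using a c by (auto simp: tail_sum_mat_def add.commute intro!: sum.cong)
qed (simp_all add: V_def tail_sum_mat_def)

lemma scalar_prod_self_pos:
  fixes v :: "real vec"
  assumes "v \<in> carrier_vec n" "v \<noteq> 0\<^sub>v n"
  shows "0 < v \<bullet> v"
  using conjugate_square_greater_0_vec[OF assms(1)] assms(2) by simp

lemma normal_equations_unit_rhs:
  fixes M :: "'a :: comm_semiring_1 mat"
  assumes M: "M \<in> carrier_mat n p" and s: "s \<in> carrier_vec p" and i: "i < p"
    and normal: "(transpose_mat M * M) *\<^sub>v s = c \<cdot>\<^sub>v unit_vec p i"
  shows "transpose_mat M *\<^sub>v (M *\<^sub>v s) = c \<cdot>\<^sub>v unit_vec p i"
    and "(M *\<^sub>v s) \<bullet> (M *\<^sub>v s) = c * s $ i"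
proof -
  show Ms: "transpose_mat M *\<^sub>v (M *\<^sub>v s) = c \<cdot>\<^sub>v unit_vec p i"
    using M s normal by simp
  have "(M *\<^sub>v s) \<bullet> (M *\<^sub>v s) = (transpose_mat M *\<^sub>v (M *\<^sub>v s)) \<bullet> s"
    using M s by (simp add: transpose_vec_mult_scalar)
  also have "\<dots> = c * s $ i"
    using s i unfolding Ms by simp
  finally show "(M *\<^sub>v s) \<bullet> (M *\<^sub>v s) = c * s $ i" .
qed

locale rim_as_iteration =
  fixes m n q l :: nat and A :: "real mat" and b :: "real vec"
    and S :: "nat \<Rightarrow> real mat" and x s :: "nat \<Rightarrow> real vec"
  assumes l_pos: "1 \<le> l"
    and x0_carrier: "x 0 \<in> carrier_vec n"
    and S_carrier: "\<And>k. S k \<in> carrier_mat m q"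
    and S_res_nonzero: "\<And>k. transpose_mat (S k) *\<^sub>v rim_res A b (x k) \<noteq> 0\<^sub>v q"
    and s_carrier: "\<And>k. s k \<in> carrier_vec (k - rim_j l k + 1)"
    and s_solves: "\<And>k. (transpose_mat (rim_M n A b S x l k) * rim_M n A b S x l k) *\<^sub>v s k
                     = rim_gamma A b S x k \<cdot>\<^sub>v unit_vec (k - rim_j l k + 1) (k - rim_j l k)"
    and x_step: "\<And>k. x (Suc k) = x k + rim_M n A b S x l k *\<^sub>v s k"
begin

abbreviation "M \<equiv> rim_M n A b S x l"
abbreviation "\<gamma> \<equiv> rim_gamma A b S x"
abbreviation "j \<equiv> rim_j l"

lemma j_mono: "k \<le> k' \<Longrightarrow> j k \<le> j k'"
  by (simp add: rim_j_def)

lemma M_carrier: "M k \<in> carrier_mat n (k - j k + 1)"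
  unfolding rim_M_def by (rule carrier_matI) auto

lemma x_carrier: "x k \<in> carrier_vec n"
proof (induction k)
  case (Suc k)
  then show ?case
    using x_step[of k] M_carrier[of k] s_carrier[of k] by simp
qed (rule x0_carrier)

lemma step_eq: "x (Suc k) - x k = M k *\<^sub>v s k"
  using x_step[of k] x_carrier[of k] M_carrier[of k] by (intro eq_vecI) auto

lemma col_M: "i < k - j k \<Longrightarrow> col (M k) i = x (j k + i) - x k"
  unfolding rim_M_def using x_carrier by (simp add: nth_append)

lemma gamma_pos: "0 < \<gamma> k"
proof -
  have "transpose_mat (S k) *\<^sub>v rim_res A b (x k) \<in> carrier_vec q"
    using S_carrier[of k] by (simp add: carrier_vecI)
  then show ?thesis
    using scalar_prod_self_pos S_res_nonzero[of k] by (simp add: rim_gamma_def Let_def)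
qed

lemma M_transpose_step: "transpose_mat (M k) *\<^sub>v (x (Suc k) - x k) = \<gamma> k \<cdot>\<^sub>v unit_vec (k - j k + 1) (k - j k)"
  unfolding step_eq by (rule normal_equations_unit_rhs(1)[OF M_carrier s_carrier _ s_solves]) simp

lemma step_norm: "(x (Suc k) - x k) \<bullet> (x (Suc k) - x k) = \<gamma> k * s k $ (k - j k)"
  unfolding step_eq by (rule normal_equations_unit_rhs(2)[OF M_carrier s_carrier _ s_solves]) simp

lemma step_perp_window:
  assumes "j k \<le> i" "i < k"
  shows "(x i - x k) \<bullet> (x (Suc k) - x k) = 0"
proof -
  have t: "i - j k < k - j k"
    using assms by simp
  have "(x i - x k) \<bullet> (x (Suc k) - x k) = (transpose_mat (M k) *\<^sub>v (x (Suc k) - x k)) $ (i - j k)"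
    using col_M[OF t] M_carrier[of k] t assms by simp
  also have "\<dots> = 0"
    unfolding M_transpose_step using t by simp
  finally show ?thesis .
qed

lemma step_nonzero: "x (Suc k) - x k \<noteq> 0\<^sub>v n"
proof
  assume "x (Suc k) - x k = 0\<^sub>v n"
  then have "(transpose_mat (M k) *\<^sub>v (x (Suc k) - x k)) $ (k - j k) = 0"
    using M_carrier[of k] by (simp add: carrier_vecI)
  moreover have "(transpose_mat (M k) *\<^sub>v (x (Suc k) - x k)) $ (k - j k) = \<gamma> k"
    unfolding M_transpose_step by simp
  ultimately show False
    using gamma_pos[of k] by simp
qed

lemma increments_orthogonal:
  assumes "j t \<le> i" "i < t"
  shows "(x (Suc i) - x i) \<bullet> (x (Suc t) - x t) = 0"
proof -
  have "(x (Suc i) - x t) \<bullet> (x (Suc t) - x t) = 0"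
  proof (cases "Suc i = t")
    case True
    then show ?thesis using x_carrier[of t] x_carrier[of "Suc t"] by simp
  qed (use assms step_perp_window in simp)
  moreover have "(x i - x t) \<bullet> (x (Suc t) - x t) = 0"
    using assms by (rule step_perp_window)
  ultimately show ?thesis
    using x_carrier by (simp add: minus_scalar_prod_distrib[of _ n])
qed

lemma gamma_s_last_pos: "0 < \<gamma> k * s k $ (k - j k)"
  using scalar_prod_self_pos[OF _ step_nonzero] x_carrier by (simp add: step_norm[symmetric])

lemma gram_rim_V: "transpose_mat (rim_V n x l k) * rim_V n x l k
    = tail_sum_mat (map (\<lambda>i. \<gamma> i * s i $ (i - j i)) [j k..<k])"
proof -
  have "(x (Suc i') - x i') \<bullet> (x (Suc t) - x t) = 0" if "j k \<le> i'" "i' < t" "t < k" for i' t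
    using that j_mono[of t k] by (intro increments_orthogonal) auto
  then show ?thesis
    unfolding rim_V_def step_norm[symmetric] by (rule gram_mat_of_orthogonal_increments[OF x_carrier])
qed

end

theorem lemma3p3:
  fixes m n q l :: nat
    and A :: "real mat" and b :: "real vec"
    and \<Omega> :: "real mat set"
    and S :: "nat \<Rightarrow> real mat"
    and x s :: "nat \<Rightarrow> real vec"
  assumes A: "A \<in> carrier_mat m n"
    and b: "b \<in> carrier_vec m"
    and consistent: "\<exists>z \<in> carrier_vec n. A *\<^sub>v z = b"
    and l: "l \<ge> 1"
    and Omega: "\<Omega> \<subseteq> carrier_mat m q"
    and S_in: "\<And>k. S k \<in> \<Omega>"
    and S_nz: "\<And>k. transpose_mat (S k) *\<^sub>v rim_res A b (x k) \<noteq> 0\<^sub>v q"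
    and x0: "\<exists>y \<in> carrier_vec m. x 0 = transpose_mat A *\<^sub>v y"
    and s_dim: "\<And>k. s k \<in> carrier_vec (k - rim_j l k + 1)"
    and s_solves: "\<And>k. (transpose_mat (rim_M n A b S x l k) * rim_M n A b S x l k) *\<^sub>v s k
                     = rim_gamma A b S x k \<cdot>\<^sub>v unit_vec (k - rim_j l k + 1) (k - rim_j l k)"
    and x_step: "\<And>k. x (Suc k) = x k + rim_M n A b S x l k *\<^sub>v s k"
    and k: "k \<ge> 1"
  shows "invertible_mat (transpose_mat (rim_V n x l k) * rim_V n x l k)
    \<and> inverts_mat (transpose_mat (rim_V n x l k) * rim_V n x l k)
         (Ctri (map (\<lambda>i. rim_gamma A b S x i * s i $ (i - rim_j l i)) [rim_j l k..<k]))
    \<and> inverts_mat (Ctri (map (\<lambda>i. rim_gamma A b S x i * s i $ (i - rim_j l i)) [rim_j l k..<k]))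
         (transpose_mat (rim_V n x l k) * rim_V n x l k)"
proof -
  interpret rim_as_iteration m n q l A b S x s
  proof
    show "x 0 \<in> carrier_vec n"
      using x0 A by auto
    show "S k \<in> carrier_mat m q" for k
      using S_in Omega by auto
  qed (fact l S_nz s_dim s_solves x_step)+
  show ?thesis
    unfolding gram_rim_V
    by (intro tail_sum_mat_inverse) (simp add: gamma_s_last_pos[THEN less_imp_neq, symmetric] del: mult_eq_0_iff)
qed

end
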